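(* In the two-party one-way communication (Holevo–Frenkel–Weiner) scenario with no pre-shared correlation between the parties, the utility of communicating one qubit is higher than that of one bit of classical communication: there exist finite sets $\mathcal{X},\mathcal{B}$ and a payoff function $\beta$ on correlations $P(\mathcal{B}|\mathcal{X})$ such that $\sup_{P\in\mathcal{Q}}\beta(P)>\sup_{P\in\mathcal{C}}\beta(P)$.
   Context: Scenario: Alice receives an input $x$ from a finite set $\mathcal{X}$, Bob must output $b$ from a finite set $\mathcal{B}$; a correlation is a conditional distribution $P=(P(b|x))$, and a task is a payoff function $\beta$ assigning a real number to each correlation; the utility of a resource is $\sup\beta(P)$ over the correlations achievable with it. $\mathcal{C}$ (one classical bit, no shared randomness, local randomness allowed): correlations $P(b|x)=\sum_{m\in\{0,1\}}E(m|x)D(b|m)$ with $E(\cdot|x)$ a probability distribution on $\{0,1\}$ for each $x$ and $D(\cdot|m)$ a probability distribution on $\mathcal{B}$ for each $m$. $\mathcal{Q}$ (one qubit, no shared correlation): correlations $P(b|x)=\operatorname{Tr}(\rho_x\pi_b)$, where each $\rho_x$ is a density operator on $\mathbb{C}^2$ and $\{\pi_b\}_{b\in\mathcal{B}}$ is a POVM on $\mathbb{C}^2$ ($\pi_b\ge0$, $\sum_b\pi_b=\mathbb{I}$). *)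

theory Defs
  imports "HOL-Analysis.Analysis"
begin

(* A correlation P(b|x) is represented as P b x :: real, with inputs x in X and
   outputs b in B (finite sets of naturals); P is taken to be 0 outside B x X so that
   correlations are determined by their values on B x X. *)

type_synonym corr = "nat \<Rightarrow> nat \<Rightarrow> real"

definition tr2 :: "complex^2^2 \<Rightarrow> complex" where
  "tr2 A = (\<Sum>i\<in>UNIV. A $ i $ i)"

definition psd2 :: "complex^2^2 \<Rightarrow> bool" where
  "psd2 A \<longleftrightarrow> (\<forall>v::complex^2.
      let q = (\<Sum>i\<in>UNIV. cnj (v $ i) * (\<Sum>j\<in>UNIV. A $ i $ j * v $ j))
      in Im q = 0 \<and> Re q \<ge> 0)"

definition density2 :: "complex^2^2 \<Rightarrow> bool" where
  "density2 \<rho> \<longleftrightarrow> psd2 \<rho> \<and> tr2 \<rho> = 1"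

definition povm2 :: "nat set \<Rightarrow> (nat \<Rightarrow> complex^2^2) \<Rightarrow> bool" where
  "povm2 B \<pi> \<longleftrightarrow> (\<forall>b\<in>B. psd2 (\<pi> b)) \<and> (\<Sum>b\<in>B. \<pi> b) = mat 1"

definition quantum_corrs :: "nat set \<Rightarrow> nat set \<Rightarrow> corr set" where
  "quantum_corrs X B = {P. \<exists>\<rho> \<pi>. (\<forall>x\<in>X. density2 (\<rho> x)) \<and> povm2 B \<pi> \<and>
      (\<forall>x b. if x \<in> X \<and> b \<in> B then complex_of_real (P b x) = tr2 (\<rho> x ** \<pi> b)
             else P b x = 0)}"

(* C: one classical bit, no shared randomness, local randomness allowed *)
definition classical_corrs :: "nat set \<Rightarrow> nat set \<Rightarrow> corr set" where
  "classical_corrs X B = {P. \<exists>(E::nat \<Rightarrow> nat \<Rightarrow> real) (D::nat \<Rightarrow> nat \<Rightarrow> real).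
      (\<forall>x\<in>X. (\<forall>m\<in>{0,1}. E m x \<ge> 0) \<and> (\<Sum>m\<in>{0,1}. E m x) = 1) \<and>
      (\<forall>m\<in>{0,1}. (\<forall>b\<in>B. D b m \<ge> 0) \<and> (\<Sum>b\<in>B. D b m) = 1) \<and>
      (\<forall>x b. P b x = (if x \<in> X \<and> b \<in> B then (\<Sum>m\<in>{0,1}. E m x * D b m) else 0))}"

definition utility :: "(corr \<Rightarrow> real) \<Rightarrow> corr set \<Rightarrow> ereal" where
  "utility \<beta> S = (SUP P\<in>S. ereal (\<beta> P))"

end

theory Submission
  imports Defs
begin

text \<open>With one classical bit and no shared randomness, the output distribution on input x is
  \<open>P(\<cdot>|x) = e\<^sub>x D(\<cdot>|0) + (1 - e\<^sub>x) D(\<cdot>|1)\<close>, so the distributions for all inputs lie on one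
  line. Hence the determinant of the differences \<open>P(\<cdot>|x) - P(\<cdot>|x'')\<close>, \<open>P(\<cdot>|x') - P(\<cdot>|x'')\<close>,
  restricted to two outputs, vanishes for every classical correlation, and its absolute value is a
  payoff with classical utility 0. A qubit escapes the line: preparing \<open>|0\<rangle>, |1\<rangle>, |+\<rangle>\<close> and
  measuring the POVM \<open>{|0\<rangle>\<langle>0|/2, |+\<rangle>\<langle>+|/2, rest}\<close> gives determinant \<open>-1/8\<close>.\<close>

definition dimension_witness :: "nat \<Rightarrow> nat \<Rightarrow> nat \<Rightarrow> nat \<Rightarrow> nat \<Rightarrow> corr \<Rightarrow> real" where
  "dimension_witness b b' x x' x'' P =
     (P b x - P b x'') * (P b' x' - P b' x'') - (P b' x - P b' x'') * (P b x' - P b x'')"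

lemma dimension_witness_eq_0_if_classical:
  assumes "P \<in> classical_corrs X B" and "x \<in> X" "x' \<in> X" "x'' \<in> X" and "b \<in> B" "b' \<in> B"
  shows "dimension_witness b b' x x' x'' P = 0"
proof -
  from assms(1) obtain E D where
    E: "\<forall>x\<in>X. (\<forall>m\<in>{0,1}. E m x \<ge> 0) \<and> (\<Sum>m\<in>{0::nat,1}. E m x) = (1::real)" and
    P: "\<forall>x b. P b x = (if x \<in> X \<and> b \<in> B then (\<Sum>m\<in>{0::nat,1}. E m x * D b m) else 0)"
    unfolding classical_corrs_def by blast
  have on_line: "P c y = D c 1 + E 0 y * (D c 0 - D c 1)" if "y \<in> X" "c \<in> B" for c y
  proof -
    have "E 0 y + E 1 y = 1" using E that(1) by simp
    then have E1: "E 1 y = 1 - E 0 y" by linarith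
    have "P c y = E 0 y * D c 0 + E 1 y * D c 1" using P that by simp
    then show ?thesis unfolding E1 by (simp add: algebra_simps)
  qed
  show ?thesis
    unfolding dimension_witness_def using assms(2-6) by (simp add: on_line algebra_simps)
qed

definition sym2 :: "real \<Rightarrow> real \<Rightarrow> real \<Rightarrow> complex^2^2" where
  "sym2 a b d = (\<chi> i j. if i = 1 then (if j = 1 then of_real a else of_real b)
                        else (if j = 1 then of_real b else of_real d))"

lemma sym2_nth [simp]:
  "sym2 a b d $ 1 $ 1 = of_real a" "sym2 a b d $ 1 $ 2 = of_real b"
  "sym2 a b d $ 2 $ 1 = of_real b" "sym2 a b d $ 2 $ 2 = of_real d"
  by (simp_all add: sym2_def)

lemma binary_quadratic_form_nonneg:
  fixes a b d x y :: real
  assumes "a \<ge> 0" "d \<ge> 0" "b * b \<le> a * d"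
  shows "a * x * x + 2 * b * x * y + d * y * y \<ge> 0"
proof (cases "a = 0")
  case True
  then have "b = 0" using assms(3) by (metis mult_zero_left not_real_square_gt_zero order_less_le_trans)
  then show ?thesis using True assms(2) by (simp add: mult.assoc)
next
  case False
  then have "a > 0" using assms(1) by simp
  have "a * (a * x * x + 2 * b * x * y + d * y * y) = (a * x + b * y)\<^sup>2 + (a * d - b * b) * (y * y)"
    by (simp add: algebra_simps power2_eq_square)
  also have "\<dots> \<ge> 0" using assms(3) by simp
  finally show ?thesis using \<open>a > 0\<close> by (simp add: zero_le_mult_iff)
qed

lemma psd2_sym2:
  assumes "a \<ge> 0" "d \<ge> 0" "b * b \<le> a * d"
  shows "psd2 (sym2 a b d)"
  unfolding psd2_def Let_def
proof
  fix v :: "complex^2"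
  obtain x1 y1 where v1: "v $ 1 = Complex x1 y1" by (metis complex.exhaust)
  obtain x2 y2 where v2: "v $ 2 = Complex x2 y2" by (metis complex.exhaust)
  have "(\<Sum>i\<in>UNIV. cnj (v $ i) * (\<Sum>j\<in>UNIV. sym2 a b d $ i $ j * v $ j))
    = Complex (a * x1 * x1 + 2 * b * x1 * x2 + d * x2 * x2 + (a * y1 * y1 + 2 * b * y1 * y2 + d * y2 * y2)) 0"
    (is "?q = _") by (simp add: sum_2 v1 v2 complex_eq_iff algebra_simps)
  then show "Im ?q = 0 \<and> 0 \<le> Re ?q"
    using binary_quadratic_form_nonneg[OF assms, of x1 x2] binary_quadratic_form_nonneg[OF assms, of y1 y2]
    by simp
qed

lemma tr2_sym2: "tr2 (sym2 a b d) = of_real (a + d)"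
  by (simp add: tr2_def sum_2)

lemma tr2_sym2_mult: "tr2 (sym2 a b d ** sym2 a' b' d') = of_real (a * a' + 2 * b * b' + d * d')"
  by (simp add: tr2_def sum_2 matrix_matrix_mult_def algebra_simps)

definition witness_state :: "nat \<Rightarrow> complex^2^2" where
  "witness_state x = (if x = 0 then sym2 1 0 0 else if x = 1 then sym2 0 0 1 else sym2 (1/2) (1/2) (1/2))"

definition witness_effect :: "nat \<Rightarrow> complex^2^2" where
  "witness_effect b = (if b = 0 then sym2 (1/2) 0 0 else if b = 1 then sym2 (1/4) (1/4) (1/4)
                       else sym2 (1/4) (-1/4) (3/4))"

definition witness_corr :: corr where
  "witness_corr b x = (if x \<in> {0,1,2} \<and> b \<in> {0,1,2}
                       then Re (tr2 (witness_state x ** witness_effect b)) else 0)"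

lemma tr2_witness_real:
  "tr2 (witness_state x ** witness_effect b) = of_real (Re (tr2 (witness_state x ** witness_effect b)))"
  by (simp add: witness_state_def witness_effect_def tr2_sym2_mult)

lemma witness_corr_in_quantum_corrs: "witness_corr \<in> quantum_corrs {0,1,2} {0,1,2}"
proof -
  have "\<forall>x\<in>{0::nat,1,2}. density2 (witness_state x)"
    by (auto simp: density2_def witness_state_def tr2_sym2 intro!: psd2_sym2)
  moreover have "\<forall>b\<in>{0::nat,1,2}. psd2 (witness_effect b)"
    by (auto simp: witness_effect_def intro!: psd2_sym2)
  moreover have "(\<Sum>b\<in>{0::nat,1,2}. witness_effect b) = mat 1"
    by (simp add: witness_effect_def vec_eq_iff forall_2 mat_def)
  moreover have "\<forall>x b. if x \<in> {0,1,2} \<and> b \<in> {0,1,2}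
      then complex_of_real (witness_corr b x) = tr2 (witness_state x ** witness_effect b)
      else witness_corr b x = 0"
    by (simp add: witness_corr_def tr2_witness_real[symmetric])
  ultimately show ?thesis unfolding quantum_corrs_def povm2_def by blast
qed

lemma dimension_witness_witness_corr: "dimension_witness 0 1 0 1 2 witness_corr = - 1/8"
  by (simp add: dimension_witness_def witness_corr_def witness_state_def witness_effect_def
      tr2_sym2_mult)

theorem theorem2:
  shows "\<exists>(X::nat set) (B::nat set) (\<beta>::corr \<Rightarrow> real).
           finite X \<and> finite B \<and>
           utility \<beta> (quantum_corrs X B) > utility \<beta> (classical_corrs X B)"
proof (intro exI conjI)
  let ?\<beta> = "\<lambda>P. \<bar>dimension_witness 0 1 0 1 2 P\<bar>"
  have "utility ?\<beta> (classical_corrs {0,1,2} {0,1,2}) \<le> 0"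
    unfolding utility_def by (rule SUP_least) (simp add: dimension_witness_eq_0_if_classical)
  also have "\<dots> < ereal (1/8)" by simp
  also have "\<dots> = ereal (?\<beta> witness_corr)" unfolding dimension_witness_witness_corr by simp
  also have "\<dots> \<le> utility ?\<beta> (quantum_corrs {0,1,2} {0,1,2})"
    unfolding utility_def by (rule SUP_upper[OF witness_corr_in_quantum_corrs])
  finally show "utility ?\<beta> (classical_corrs {0,1,2} {0,1,2}) < utility ?\<beta> (quantum_corrs {0,1,2} {0,1,2})" .
qed simp_all

end
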